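(* Let $N\ge2$, $\gamma\in(\tfrac12,\tfrac32)$, and let $\Gamma$ satisfy (A1) and (A2) with constant $C_1>0$. Let $\delta\ge0$ and $\alpha\ge 2\gamma$, and take the communication weight $\psi_\delta(s)=(s-\delta)^{-\alpha}$ for $s>\delta$. Suppose the initial data satisfy $|x_{i0}-x_{j0}|>\delta$ for all $1\le i\ne j\le N$. Then for any global smooth solution $(x(t),v(t))$ of the NL CS system with weight $\psi_\delta$ we have $T_0=\infty$. Moreover, for all $t\in[0,T_0)$: (i) if $\alpha=2\gamma$, $$\mathcal{L}^0(t)+\frac{1}{2C_1\gamma(N-1)}\sum_i|v_i(t)|^2\le\frac{2\gamma-1}{2\gamma}\,t+\mathcal{L}^0(0)+\frac{1}{2C_1\gamma(N-1)}\sum_i|v_{i0}|^2;$$ (ii) if $\alpha>2\gamma$, then with $\beta=\frac{\alpha}{2\gamma}-1$, $$\mathcal{L}^\beta(t)+\frac{\beta}{2C_1\gamma(N-1)}\sum_i|v_i(t)|^2\le\frac{(2\gamma-1)\beta}{2\gamma}\,t+\mathcal{L}^\beta(0)+\frac{\beta}{2C_1\gamma(N-1)}\sum_i|v_{i0}|^2.$$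
   Context: The NL CS system: $\frac{d}{dt}x_i=v_i$, $\frac{d}{dt}v_i=\frac1N\sum_{j=1}^N\psi(|x_i-x_j|)\Gamma(v_j-v_i)$, $i=1,\dots,N$, with $x_i,v_i\in\mathbb{R}^d$, initial data $(x_{i0},v_{i0})$, here with $\psi=\psi_\delta$. (A1): $\Gamma(-v)=-\Gamma(v)$ for all $v\in\mathbb{R}^d$. (A2): $\langle\Gamma(v),v\rangle\ge C_1|v|^{2\gamma}$ for all $v\in\mathbb{R}^d$. Sums $\sum_i$ run over $1\le i\le N$, and $\sum_{i\ne j}$ over all ordered pairs with $i\ne j$. For a configuration with $|x_i-x_j|>\delta$ for all $i\ne j$, define for $\beta>0$ $$\mathcal{L}^\beta(t)=\frac{1}{N(N-1)}\sum_{i\ne j}\big(|x_i(t)-x_j(t)|-\delta\big)^{-\beta},\qquad \mathcal{L}^0(t)=\frac{1}{N(N-1)}\sum_{i\ne j}\log\big(|x_i(t)-x_j(t)|-\delta\big).$$ A collision at time $t$ means $|x_i(t)-x_j(t)|\le\delta$ for some $i\ne j$. The maximal collisionless life-span is $T_0:=\sup\{s\ge0:\ \text{no solution of the system with the given data has a collision on }[0,s)\}$. *)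

theory Defs
  imports "HOL-Analysis.Analysis"
begin

definition psi_delta :: "real \<Rightarrow> real \<Rightarrow> real \<Rightarrow> real" where
  "psi_delta \<delta> \<alpha> s = (s - \<delta>) powr (- \<alpha>)"

definition collisionless :: "nat \<Rightarrow> real \<Rightarrow> (nat \<Rightarrow> real \<Rightarrow> 'a::real_normed_vector) \<Rightarrow> real \<Rightarrow> bool" where
  "collisionless N \<delta> x t \<longleftrightarrow> (\<forall>i\<in>{1..N}. \<forall>j\<in>{1..N}. i \<noteq> j \<longrightarrow> norm (x i t - x j t) > \<delta>)"

definition life_span :: "nat \<Rightarrow> real \<Rightarrow> (nat \<Rightarrow> real \<Rightarrow> 'a::real_normed_vector) \<Rightarrow> ereal" where
  "life_span N \<delta> x = Sup {ereal s | s. s \<ge> 0 \<and> (\<forall>\<tau>. 0 \<le> \<tau> \<and> \<tau> < s \<longrightarrow> collisionless N \<delta> x \<tau>)}"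

definition Lbeta :: "nat \<Rightarrow> real \<Rightarrow> real \<Rightarrow> (nat \<Rightarrow> real \<Rightarrow> 'a::real_normed_vector) \<Rightarrow> real \<Rightarrow> real" where
  "Lbeta N \<delta> \<beta> x t = (1 / (real N * (real N - 1))) *
     (\<Sum>i\<in>{1..N}. \<Sum>j\<in>{1..N}-{i}. (norm (x i t - x j t) - \<delta>) powr (- \<beta>))"

definition L0 :: "nat \<Rightarrow> real \<Rightarrow> (nat \<Rightarrow> real \<Rightarrow> 'a::real_normed_vector) \<Rightarrow> real \<Rightarrow> real" where
  "L0 N \<delta> x t = (1 / (real N * (real N - 1))) *
     (\<Sum>i\<in>{1..N}. \<Sum>j\<in>{1..N}-{i}. ln (norm (x i t - x j t) - \<delta>))"

end

theory Submission
  imports Defs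
begin

text \<open>Take a barrier \<open>f\<close> on \<open>(\<delta>, \<infinity>)\<close> with \<open>|f' s| \<le> \<kappa> (s - \<delta>) powr (-\<alpha>/(2\<gamma>))\<close>.
  Along collisionless motion the functional
  \<open>1/(N(N-1)) \<Sum>\<^bsub>i\<noteq>j\<^esub> f |x i - x j| + \<kappa>/(2 C\<^sub>1 \<gamma> (N-1)) \<Sum>\<^sub>i |v i|\<^sup>2\<close> grows at most
  linearly: by (A1) and (A2) the kinetic energy dissipates at the rate
  \<open>\<Sum>\<^bsub>i\<noteq>j\<^esub> \<psi>\<^sub>\<delta> |x i - x j| |v i - v j| powr (2\<gamma>)\<close>, while by Cauchy-Schwarz and Young the
  barrier part grows at most at that same rate plus a constant.
  The barriers \<open>ln (s - \<delta>)\<close> (for \<open>\<alpha> = 2\<gamma>\<close>) and \<open>(s - \<delta>) powr (-\<beta>)\<close> (for \<open>\<alpha> > 2\<gamma>\<close>) give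
  the two estimates. For a nonnegative barrier blowing up at \<open>\<delta>\<close>, namely
  \<open>ln (1 + s - \<delta>) - ln (s - \<delta>)\<close> resp. \<open>(s - \<delta>) powr (-\<beta>)\<close>, the same bound keeps every pair
  away from distance \<open>\<delta>\<close> on bounded time intervals, so there is no first collision and
  \<open>T\<^sub>0 = \<infinity>\<close>.\<close>

lemma has_real_derivative_norm:
  fixes y :: "real \<Rightarrow> 'a::real_inner"
  assumes "(y has_vector_derivative w) (at s within S)" and "y s \<noteq> 0"
  shows "((\<lambda>t. norm (y t)) has_real_derivative inner (y s) w / norm (y s)) (at s within S)"
proof -
  have "(norm has_derivative (\<lambda>h. h \<bullet> sgn (y s))) (at (y s))"
    using has_derivative_norm[OF assms(2)] by simp
  from has_derivative_compose[OF assms(1)[unfolded has_vector_derivative_def] this]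
  have "((\<lambda>t. norm (y t)) has_derivative (\<lambda>h. (h *\<^sub>R w) \<bullet> sgn (y s))) (at s within S)"
    by (simp add: o_def)
  then show ?thesis
    unfolding has_field_derivative_def
    by (rule has_derivative_eq_rhs) (auto simp: fun_eq_iff sgn_div_norm inner_commute divide_inverse mult_ac)
qed

lemma has_real_derivative_norm_power2:
  fixes y :: "real \<Rightarrow> 'a::real_inner"
  assumes "(y has_vector_derivative w) (at s within S)"
  shows "((\<lambda>t. (norm (y t))\<^sup>2) has_real_derivative 2 * inner (y s) w) (at s within S)"
proof -
  note dy = assms[unfolded has_vector_derivative_def]
  from has_derivative_inner[OF dy dy] show ?thesis
    unfolding has_field_derivative_def power2_norm_eq_inner
    by (rule has_derivative_eq_rhs) (auto simp: fun_eq_iff inner_commute algebra_simps)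
qed

lemma nonincreasing_of_derivative_nonpos:
  fixes G :: "real \<Rightarrow> real"
  assumes "a \<le> b"
    and "\<And>s. a \<le> s \<Longrightarrow> s \<le> b \<Longrightarrow> \<exists>D. (G has_real_derivative D) (at s within {a..b}) \<and> D \<le> 0"
  shows "G b \<le> G a"
proof (rule DERIV_nonpos_imp_decreasing_open[OF assms(1)])
  show "continuous_on {a..b} G"
    unfolding continuous_on_eq_continuous_within using assms(2) DERIV_continuous by fastforce
  fix s assume s: "a < s" "s < b"
  then obtain D where "(G has_real_derivative D) (at s within {a..b})" "D \<le> 0"
    using assms(2)[of s] by auto
  moreover have "at s within {a..b} = at s"
    using s by (intro at_within_interior) auto
  ultimately show "\<exists>D. (G has_real_derivative D) (at s) \<and> D \<le> 0" by auto
qed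

lemma le_powr_Young:
  fixes a g :: real
  assumes "0 \<le> a" and "1 < g"
  shows "a \<le> a powr g / g + (g - 1) / g"
  using Youngs_inequality[of g "g / (g - 1)" a 1] assms by (simp add: field_simps)

lemma sum_off_diagonal_const:
  assumes "finite I"
  shows "(\<Sum>i\<in>I. \<Sum>j\<in>I - {i}. c) = real (card I) * (real (card I) - 1) * (c::real)"
proof -
  have "card (I - {i}) = real (card I) - 1" if "i \<in> I" for i
    using assms that card_gt_0_iff[of I] by (auto simp: card_Diff_singleton of_nat_diff)
  then have "(\<Sum>i\<in>I. \<Sum>j\<in>I - {i}. c) = (\<Sum>i\<in>I. (real (card I) - 1) * c)"
    by (intro sum.cong) auto
  then show ?thesis by simp
qed

text \<open>Since \<open>\<Gamma>\<close> is odd, the pairs \<open>(i, j)\<close> and \<open>(j, i)\<close> together contribute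
  \<open>-\<psi> i j \<langle>\<Gamma> w, w\<rangle>\<close> with \<open>w = v j - v i\<close>, which coercivity bounds.\<close>
lemma alignment_sum_le:
  fixes \<Gamma> :: "'a::real_inner \<Rightarrow> 'a" and \<psi> :: "'i \<Rightarrow> 'i \<Rightarrow> real"
  assumes "finite I"
    and psi_sym: "\<And>i j. \<psi> j i = \<psi> i j" and psi_nonneg: "\<And>i j. 0 \<le> \<psi> i j"
    and odd: "\<And>w. \<Gamma> (- w) = - \<Gamma> w"
    and coercive: "\<And>w. C * norm w powr p \<le> inner (\<Gamma> w) w"
  shows "(\<Sum>i\<in>I. \<Sum>j\<in>I. \<psi> i j * inner (v i) (\<Gamma> (v j - v i)))
    \<le> - (C / 2) * (\<Sum>i\<in>I. \<Sum>j\<in>I - {i}. \<psi> i j * norm (v i - v j) powr p)"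
proof -
  define P where "P i j = \<psi> i j * inner (v i) (\<Gamma> (v j - v i))" for i j
  define Q where "Q i j = \<psi> i j * norm (v i - v j) powr p" for i j
  have pair: "P i j + P j i \<le> - C * Q i j" for i j
  proof -
    have "P i j + P j i = - \<psi> i j * inner (\<Gamma> (v j - v i)) (v j - v i)"
      using odd[of "v j - v i"] psi_sym[of i j]
      by (simp add: P_def inner_diff_left inner_diff_right inner_commute algebra_simps)
    also have "\<dots> \<le> - \<psi> i j * (C * norm (v j - v i) powr p)"
      using coercive psi_nonneg by (simp add: mult_left_mono)
    finally show ?thesis by (simp add: Q_def norm_minus_commute mult_ac)
  qed
  have "2 * (\<Sum>i\<in>I. \<Sum>j\<in>I. P i j) = (\<Sum>i\<in>I. \<Sum>j\<in>I. P i j + P j i)"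
    using sum.swap[of P I I] by (simp add: sum.distrib)
  also have "\<dots> \<le> (\<Sum>i\<in>I. \<Sum>j\<in>I. - C * Q i j)"
    by (intro sum_mono pair)
  also have "\<dots> = - C * (\<Sum>i\<in>I. \<Sum>j\<in>I - {i}. Q i j)"
    using assms(1) by (simp add: sum_distrib_left sum.remove Q_def)
  finally show ?thesis unfolding P_def Q_def by simp
qed

text \<open>Cauchy-Schwarz and Young with exponents \<open>2\<gamma>\<close> and \<open>2\<gamma>/(2\<gamma>-1)\<close> trade the rate of change
  of a barrier term for the dissipation \<open>\<psi>\<^sub>\<delta> |w|\<^sup>2\<^sup>\<gamma>\<close> plus a constant.\<close>
lemma barrier_rate_le:
  fixes y w :: "'a::real_inner"
  assumes fb: "\<bar>f' (norm y)\<bar> \<le> \<kappa> * (norm y - \<delta>) powr (- (\<alpha> / (2 * \<gamma>)))"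
    and "0 \<le> \<kappa>" and "1/2 < \<gamma>" and "0 \<le> \<delta>" and "\<delta> < norm y"
  shows "f' (norm y) * (inner y w / norm y)
    \<le> \<kappa> * (psi_delta \<delta> \<alpha> (norm y) * norm w powr (2 * \<gamma>) / (2 * \<gamma>) + (2 * \<gamma> - 1) / (2 * \<gamma>))"
proof -
  define u where "u = norm y - \<delta>"
  have y: "0 < norm y"
    using assms by auto
  have "f' (norm y) * (inner y w / norm y) \<le> \<bar>f' (norm y)\<bar> * (\<bar>inner y w\<bar> / norm y)"
    using y by (simp add: divide_right_mono flip: abs_mult)
  also have "\<dots> \<le> \<bar>f' (norm y)\<bar> * norm w"
    using Cauchy_Schwarz_ineq2[of y w] y by (intro mult_left_mono) (auto simp: divide_le_eq mult.commute)
  also have "\<dots> \<le> \<kappa> * (u powr (- (\<alpha> / (2 * \<gamma>))) * norm w)"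
    using mult_right_mono[OF fb norm_ge_zero[of w]] by (simp add: u_def mult.assoc)
  also have "\<dots> \<le> \<kappa> * ((u powr (- (\<alpha> / (2 * \<gamma>))) * norm w) powr (2 * \<gamma>) / (2 * \<gamma>)
      + (2 * \<gamma> - 1) / (2 * \<gamma>))"
    using le_powr_Young[of "u powr (- (\<alpha> / (2 * \<gamma>))) * norm w" "2 * \<gamma>"] assms
    by (intro mult_left_mono) auto
  also have "(u powr (- (\<alpha> / (2 * \<gamma>))) * norm w) powr (2 * \<gamma>) = u powr (- \<alpha>) * norm w powr (2 * \<gamma>)"
    using assms by (simp add: powr_mult powr_powr)
  finally show ?thesis by (simp add: psi_delta_def u_def)
qed

lemma filterlim_ln_barrier:
  fixes \<delta> :: real
  shows "filterlim (\<lambda>s. ln (1 + (s - \<delta>)) - ln (s - \<delta>)) at_top (at_right \<delta>)"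
proof -
  have "((\<lambda>u. ln (1 + u)) \<longlongrightarrow> 0) (at_right (0::real))"
    by (auto intro!: tendsto_eq_intros)
  moreover have "filterlim (\<lambda>u. - ln u) at_top (at_right (0::real))"
    using ln_at_0 by (simp add: filterlim_uminus_at_top)
  ultimately have "filterlim (\<lambda>u. ln (1 + u) + - ln u) at_top (at_right (0::real))"
    by (rule filterlim_tendsto_add_at_top)
  then show ?thesis
    unfolding filterlim_at_right_to_0[of _ _ \<delta>] by simp
qed

lemma filterlim_powr_barrier:
  fixes \<beta> \<delta> :: real
  assumes "0 < \<beta>"
  shows "filterlim (\<lambda>s. (s - \<delta>) powr (- \<beta>)) at_top (at_right \<delta>)"
proof -
  have "((\<lambda>u. u powr \<beta>) \<longlongrightarrow> 0) (at_right (0::real))"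
    using assms by (intro tendsto_zero_powrI tendsto_ident_at tendsto_const)
      (auto simp: eventually_at_right_less eventually_at_filter)
  then have "filterlim (\<lambda>u. inverse (u powr \<beta>)) at_top (at_right (0::real))"
    by (rule filterlim_inverse_at_top) (simp add: eventually_at_filter)
  then show ?thesis
    unfolding filterlim_at_right_to_0[of _ _ \<delta>] by (simp add: powr_minus)
qed

lemma first_collision:
  fixes x :: "nat \<Rightarrow> real \<Rightarrow> 'a::real_normed_vector"
  assumes cont: "\<And>i. i \<in> {1..N} \<Longrightarrow> continuous_on {0..} (x i)"
    and init: "collisionless N \<delta> x 0"
    and "0 \<le> t" and "\<not> collisionless N \<delta> x t"
  obtains T i j where "0 < T" and "i \<in> {1..N}" "j \<in> {1..N}" "i \<noteq> j"
    and "norm (x i T - x j T) \<le> \<delta>"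
    and "\<And>\<tau>. 0 \<le> \<tau> \<Longrightarrow> \<tau> < T \<Longrightarrow> collisionless N \<delta> x \<tau>"
proof -
  define P where "P = {(i, j). i \<in> {1..N} \<and> j \<in> {1..N} \<and> i \<noteq> j}"
  define S where "S = (\<Union>(i, j)\<in>P. {s \<in> {0..}. norm (x i s - x j s) \<le> \<delta>})"
  have S_iff: "s \<in> S \<longleftrightarrow> 0 \<le> s \<and> \<not> collisionless N \<delta> x s" for s
    unfolding S_def P_def collisionless_def not_less by fastforce
  have "finite P"
    by (rule finite_subset[of _ "{1..N} \<times> {1..N}"]) (auto simp: P_def)
  moreover have "closed {s \<in> {0..}. norm (x i s - x j s) \<le> \<delta>}" if "(i, j) \<in> P" for i j
  proof -
    have "continuous_on {0..} (\<lambda>s. norm (x i s - x j s))"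
      using that cont by (intro continuous_on_norm continuous_on_diff) (auto simp: P_def)
    then show ?thesis
      by (intro continuous_on_closed_Collect_le continuous_on_const closed_atLeast)
  qed
  ultimately have "closed S"
    unfolding S_def by (intro closed_UN) auto
  moreover have "S \<noteq> {}" and bdd: "bdd_below S"
    using assms(3,4) by (auto simp: S_iff intro!: bdd_belowI[of _ 0])
  ultimately have "Inf S \<in> S"
    by (intro closed_contains_Inf)
  then obtain i j where "0 \<le> Inf S" "i \<in> {1..N}" "j \<in> {1..N}" "i \<noteq> j"
      and "norm (x i (Inf S) - x j (Inf S)) \<le> \<delta>"
    unfolding S_iff collisionless_def by (auto simp: not_less)
  moreover have "Inf S \<noteq> 0"
    using \<open>Inf S \<in> S\<close> init by (auto simp: S_iff)
  moreover have "collisionless N \<delta> x \<tau>" if "0 \<le> \<tau>" "\<tau> < Inf S" for \<tau>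
    using cInf_lower[OF _ bdd, of \<tau>] that by (auto simp: S_iff)
  ultimately show ?thesis
    using that[of "Inf S"] by auto
qed

lemma life_span_eq_infinity:
  assumes "\<And>t. 0 \<le> t \<Longrightarrow> collisionless N \<delta> x t"
  shows "life_span N \<delta> x = \<infinity>"
  unfolding life_span_def
proof (rule ereal_top)
  fix B :: real
  show "ereal B \<le> Sup {ereal s | s. s \<ge> 0 \<and> (\<forall>\<tau>. 0 \<le> \<tau> \<and> \<tau> < s \<longrightarrow> collisionless N \<delta> x \<tau>)}"
    by (rule Sup_upper2[of "ereal (max B 0)"]) (use assms in \<open>auto simp: max_def\<close>)
qed

locale cs_flow =
  fixes N :: nat and \<gamma> C\<^sub>1 \<delta> \<alpha> :: real
    and \<Gamma> :: "'a::real_inner \<Rightarrow> 'a"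
    and x v :: "nat \<Rightarrow> real \<Rightarrow> 'a"
  assumes N: "2 \<le> N"
    and gamma: "1/2 < \<gamma>"
    and C1: "0 < C\<^sub>1"
    and A1: "\<And>w. \<Gamma> (- w) = - \<Gamma> w"
    and A2: "\<And>w. C\<^sub>1 * norm w powr (2 * \<gamma>) \<le> inner (\<Gamma> w) w"
    and delta: "0 \<le> \<delta>"
    and dx: "\<And>i t. i \<in> {1..N} \<Longrightarrow> 0 \<le> t \<Longrightarrow>
               (x i has_vector_derivative v i t) (at t within {0..})"
    and dv: "\<And>i t. i \<in> {1..N} \<Longrightarrow> 0 \<le> t \<Longrightarrow> collisionless N \<delta> x t \<Longrightarrow>
               (v i has_vector_derivative
                  ((1 / real N) *\<^sub>R (\<Sum>j\<in>{1..N}.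
                      psi_delta \<delta> \<alpha> (norm (x i t - x j t)) *\<^sub>R \<Gamma> (v j t - v i t))))
               (at t within {0..})"
begin

definition pair_mean :: "(real \<Rightarrow> real) \<Rightarrow> real \<Rightarrow> real" where
  "pair_mean f t = 1 / (real N * (real N - 1)) *
     (\<Sum>i\<in>{1..N}. \<Sum>j\<in>{1..N} - {i}. f (norm (x i t - x j t)))"

definition kinetic_energy :: "real \<Rightarrow> real" where
  "kinetic_energy t = (\<Sum>i\<in>{1..N}. (norm (v i t))\<^sup>2)"

lemma continuous_on_x: "i \<in> {1..N} \<Longrightarrow> continuous_on {0..} (x i)"
  unfolding continuous_on_eq_continuous_within
  using dx has_vector_derivative_continuous by fastforce

lemma has_real_derivative_pair_mean:
  assumes fd: "\<And>s. \<delta> < s \<Longrightarrow> (f has_real_derivative f' s) (at s)"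
    and "0 \<le> t" and col: "collisionless N \<delta> x t"
  shows "(pair_mean f has_real_derivative 1 / (real N * (real N - 1)) *
      (\<Sum>i\<in>{1..N}. \<Sum>j\<in>{1..N} - {i}. f' (norm (x i t - x j t)) *
         (inner (x i t - x j t) (v i t - v j t) / norm (x i t - x j t))))
    (at t within {0..})"
proof -
  have "((\<lambda>t. f (norm (x i t - x j t))) has_real_derivative f' (norm (x i t - x j t)) *
      (inner (x i t - x j t) (v i t - v j t) / norm (x i t - x j t))) (at t within {0..})"
    if "i \<in> {1..N}" "j \<in> {1..N} - {i}" for i j
  proof -
    have r: "\<delta> < norm (x i t - x j t)"
      using col that unfolding collisionless_def by auto
    then have "x i t - x j t \<noteq> 0"
      using delta by auto
    moreover have "((\<lambda>t. x i t - x j t) has_vector_derivative v i t - v j t) (at t within {0..})"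
      using that \<open>0 \<le> t\<close> by (intro has_vector_derivative_diff dx) auto
    ultimately show ?thesis
      using DERIV_chain2[OF fd[OF r] has_real_derivative_norm[of "\<lambda>t. x i t - x j t"]] by simp
  qed
  then show ?thesis
    unfolding pair_mean_def[abs_def] by (intro DERIV_cmult DERIV_sum) auto
qed

lemma has_real_derivative_kinetic_energy:
  assumes "0 \<le> t" and "collisionless N \<delta> x t"
  shows "(kinetic_energy has_real_derivative 2 / real N * (\<Sum>i\<in>{1..N}. \<Sum>j\<in>{1..N}.
      psi_delta \<delta> \<alpha> (norm (x i t - x j t)) * inner (v i t) (\<Gamma> (v j t - v i t))))
    (at t within {0..})"
proof -
  have "(kinetic_energy has_real_derivative (\<Sum>i\<in>{1..N}. 2 * inner (v i t)
      ((1 / real N) *\<^sub>R (\<Sum>j\<in>{1..N}. psi_delta \<delta> \<alpha> (norm (x i t - x j t)) *\<^sub>R \<Gamma> (v j t - v i t)))))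
      (at t within {0..})"
    unfolding kinetic_energy_def[abs_def]
    using assms by (intro DERIV_sum has_real_derivative_norm_power2 dv) auto
  then show ?thesis
    by (simp add: inner_sum_right sum_distrib_left)
qed

lemma kinetic_energy_rate_le:
  "2 / real N * (\<Sum>i\<in>{1..N}. \<Sum>j\<in>{1..N}.
      psi_delta \<delta> \<alpha> (norm (x i t - x j t)) * inner (v i t) (\<Gamma> (v j t - v i t)))
    \<le> - C\<^sub>1 / real N * (\<Sum>i\<in>{1..N}. \<Sum>j\<in>{1..N} - {i}.
      psi_delta \<delta> \<alpha> (norm (x i t - x j t)) * norm (v i t - v j t) powr (2 * \<gamma>))"
proof -
  have "(\<Sum>i\<in>{1..N}. \<Sum>j\<in>{1..N}.
      psi_delta \<delta> \<alpha> (norm (x i t - x j t)) * inner (v i t) (\<Gamma> (v j t - v i t)))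
    \<le> - (C\<^sub>1 / 2) * (\<Sum>i\<in>{1..N}. \<Sum>j\<in>{1..N} - {i}.
      psi_delta \<delta> \<alpha> (norm (x i t - x j t)) * norm (v i t - v j t) powr (2 * \<gamma>))"
    by (rule alignment_sum_le[OF _ _ _ A1 A2]) (auto simp: psi_delta_def norm_minus_commute)
  from mult_left_mono[OF this, of "2 / real N"] show ?thesis
    by simp
qed

text \<open>The barrier part grows at most by the dissipation rate plus a constant, while the kinetic
  energy decays at the dissipation rate; the weight \<open>K\<close> is chosen so that the two cancel.\<close>
lemma energy_estimate:
  assumes fd: "\<And>s. \<delta> < s \<Longrightarrow> (f has_real_derivative f' s) (at s)"
    and fb: "\<And>s. \<delta> < s \<Longrightarrow> \<bar>f' s\<bar> \<le> \<kappa> * (s - \<delta>) powr (- (\<alpha> / (2 * \<gamma>)))"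
    and "0 \<le> \<kappa>" and "0 \<le> t"
    and col: "\<And>\<tau>. 0 \<le> \<tau> \<Longrightarrow> \<tau> \<le> t \<Longrightarrow> collisionless N \<delta> x \<tau>"
  shows "pair_mean f t + \<kappa> / (2 * C\<^sub>1 * \<gamma> * (real N - 1)) * kinetic_energy t
    \<le> \<kappa> * (2 * \<gamma> - 1) / (2 * \<gamma>) * t + pair_mean f 0
      + \<kappa> / (2 * C\<^sub>1 * \<gamma> * (real N - 1)) * kinetic_energy 0"
proof -
  define M where "M = real N * (real N - 1)"
  define K where "K = \<kappa> / (2 * C\<^sub>1 * \<gamma> * (real N - 1))"
  define c where "c = \<kappa> * (2 * \<gamma> - 1) / (2 * \<gamma>)"
  have M: "0 < M" and K: "0 \<le> K"
    using N C1 gamma \<open>0 \<le> \<kappa>\<close> by (auto simp: M_def K_def)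
  have "\<exists>D. ((\<lambda>s. pair_mean f s + K * kinetic_energy s - c * s) has_real_derivative D)
      (at s within {0..t}) \<and> D \<le> 0" if s: "0 \<le> s" "s \<le> t" for s
  proof -
    define Q where "Q i j = psi_delta \<delta> \<alpha> (norm (x i s - x j s)) * norm (v i s - v j s) powr (2 * \<gamma>)"
      for i j
    define SQ where "SQ = (\<Sum>i\<in>{1..N}. \<Sum>j\<in>{1..N} - {i}. Q i j)"
    define P' where "P' = 1 / M * (\<Sum>i\<in>{1..N}. \<Sum>j\<in>{1..N} - {i}. f' (norm (x i s - x j s)) *
         (inner (x i s - x j s) (v i s - v j s) / norm (x i s - x j s)))"
    have P': "(pair_mean f has_real_derivative P') (at s within {0..})"
      unfolding P'_def M_def by (rule has_real_derivative_pair_mean[OF fd s(1) col[OF s]])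
    have "P' \<le> 1 / M * (\<Sum>i\<in>{1..N}. \<Sum>j\<in>{1..N} - {i}.
        \<kappa> * (Q i j / (2 * \<gamma>) + (2 * \<gamma> - 1) / (2 * \<gamma>)))"
      unfolding P'_def Q_def using M col[OF s] \<open>0 \<le> \<kappa>\<close> gamma delta
      by (intro mult_left_mono sum_mono barrier_rate_le fb) (auto simp: collisionless_def)
    also have "\<dots> = 1 / M * (\<Sum>i\<in>{1..N}. \<Sum>j\<in>{1..N} - {i}. \<kappa> / (2 * \<gamma>) * Q i j + c)"
      by (simp add: c_def add_divide_distrib algebra_simps)
    also have "(\<Sum>i\<in>{1..N}. \<Sum>j\<in>{1..N} - {i}. \<kappa> / (2 * \<gamma>) * Q i j + c)
        = \<kappa> / (2 * \<gamma>) * SQ + M * c"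
      using sum_off_diagonal_const[of "{1..N}" c]
      by (simp add: SQ_def M_def sum.distrib sum_distrib_left)
    also have "1 / M * (\<kappa> / (2 * \<gamma>) * SQ + M * c) = \<kappa> / (2 * \<gamma> * M) * SQ + c"
      using M by (simp add: field_simps)
    finally have P'_le: "P' \<le> \<kappa> / (2 * \<gamma> * M) * SQ + c" .
    define E' where "E' = 2 / real N * (\<Sum>i\<in>{1..N}. \<Sum>j\<in>{1..N}.
        psi_delta \<delta> \<alpha> (norm (x i s - x j s)) * inner (v i s) (\<Gamma> (v j s - v i s)))"
    have E': "(kinetic_energy has_real_derivative E') (at s within {0..})"
      unfolding E'_def by (rule has_real_derivative_kinetic_energy[OF s(1) col[OF s]])
    have "K * E' \<le> K * (- C\<^sub>1 / real N * SQ)"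
      unfolding E'_def SQ_def Q_def using K by (intro mult_left_mono kinetic_energy_rate_le)
    also have "\<dots> = - (\<kappa> / (2 * \<gamma> * M) * SQ)"
      using N C1 gamma by (simp add: K_def M_def field_simps)
    finally have "P' + K * E' - c * 1 \<le> 0"
      using P'_le by simp
    moreover have "(pair_mean f has_real_derivative P') (at s within {0..t})"
      by (rule DERIV_subset[OF P']) auto
    moreover have "(kinetic_energy has_real_derivative E') (at s within {0..t})"
      by (rule DERIV_subset[OF E']) auto
    ultimately show ?thesis
      by (intro exI[of _ "P' + K * E' - c * 1"] conjI DERIV_diff DERIV_add DERIV_cmult DERIV_ident)
  qed
  from nonincreasing_of_derivative_nonpos[OF \<open>0 \<le> t\<close> this] show ?thesis
    by (simp add: K_def c_def)
qed

lemma pair_term_le_pair_mean: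
  assumes f_nonneg: "\<And>s. \<delta> < s \<Longrightarrow> 0 \<le> f s"
    and col: "collisionless N \<delta> x t" and ij: "i \<in> {1..N}" "j \<in> {1..N}" "i \<noteq> j"
  shows "f (norm (x i t - x j t)) \<le> real N * (real N - 1) * pair_mean f t"
proof -
  have nonneg: "0 \<le> f (norm (x a t - x b t))" if "a \<in> {1..N}" "b \<in> {1..N} - {a}" for a b
    using col that unfolding collisionless_def by (intro f_nonneg) auto
  have "f (norm (x i t - x j t)) \<le> (\<Sum>j\<in>{1..N} - {i}. f (norm (x i t - x j t)))"
    using ij nonneg by (intro member_le_sum) auto
  also have "\<dots> \<le> (\<Sum>i\<in>{1..N}. \<Sum>j\<in>{1..N} - {i}. f (norm (x i t - x j t)))"
    using ij nonneg by (intro member_le_sum sum_nonneg) auto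
  also have "\<dots> = real N * (real N - 1) * pair_mean f t"
    using N by (simp add: pair_mean_def)
  finally show ?thesis .
qed

text \<open>If a first collision happened at \<open>T\<close>, the energy estimate would keep every barrier term
  bounded on \<open>[0, T)\<close>, while the colliding pair drives its barrier term to infinity.\<close>
lemma collisionless_of_barrier:
  assumes fd: "\<And>s. \<delta> < s \<Longrightarrow> (f has_real_derivative f' s) (at s)"
    and fb: "\<And>s. \<delta> < s \<Longrightarrow> \<bar>f' s\<bar> \<le> \<kappa> * (s - \<delta>) powr (- (\<alpha> / (2 * \<gamma>)))"
    and "0 \<le> \<kappa>"
    and f_nonneg: "\<And>s. \<delta> < s \<Longrightarrow> 0 \<le> f s"
    and f_blowup: "filterlim f at_top (at_right \<delta>)"
    and init: "collisionless N \<delta> x 0" and "0 \<le> t"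
  shows "collisionless N \<delta> x t"
proof (rule ccontr)
  assume "\<not> collisionless N \<delta> x t"
  then obtain T i j where "0 < T" and ij: "i \<in> {1..N}" "j \<in> {1..N}" "i \<noteq> j"
    and "norm (x i T - x j T) \<le> \<delta>"
    and before: "\<And>\<tau>. 0 \<le> \<tau> \<Longrightarrow> \<tau> < T \<Longrightarrow> collisionless N \<delta> x \<tau>"
    using first_collision[OF continuous_on_x init \<open>0 \<le> t\<close>] by blast
  define r where "r \<tau> = norm (x i \<tau> - x j \<tau>)" for \<tau>
  define B where "B = \<kappa> * (2 * \<gamma> - 1) / (2 * \<gamma>) * T + pair_mean f 0
    + \<kappa> / (2 * C\<^sub>1 * \<gamma> * (real N - 1)) * kinetic_energy 0"
  have bounded: "f (r \<tau>) \<le> real N * (real N - 1) * B" if "0 \<le> \<tau>" "\<tau> < T" for \<tau>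
  proof -
    have "pair_mean f \<tau> + \<kappa> / (2 * C\<^sub>1 * \<gamma> * (real N - 1)) * kinetic_energy \<tau>
      \<le> \<kappa> * (2 * \<gamma> - 1) / (2 * \<gamma>) * \<tau> + pair_mean f 0
        + \<kappa> / (2 * C\<^sub>1 * \<gamma> * (real N - 1)) * kinetic_energy 0"
      using before that by (intro energy_estimate[OF fd fb \<open>0 \<le> \<kappa>\<close> \<open>0 \<le> \<tau>\<close>]) auto
    moreover have "0 \<le> \<kappa> / (2 * C\<^sub>1 * \<gamma> * (real N - 1)) * kinetic_energy \<tau>"
      using \<open>0 \<le> \<kappa>\<close> N C1 gamma by (simp add: kinetic_energy_def sum_nonneg)
    moreover have "\<kappa> * (2 * \<gamma> - 1) / (2 * \<gamma>) * \<tau> \<le> \<kappa> * (2 * \<gamma> - 1) / (2 * \<gamma>) * T"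
      using that \<open>0 \<le> \<kappa>\<close> gamma by (intro mult_left_mono) auto
    ultimately have "pair_mean f \<tau> \<le> B"
      unfolding B_def by linarith
    then have "real N * (real N - 1) * pair_mean f \<tau> \<le> real N * (real N - 1) * B"
      using N by (intro mult_left_mono) auto
    with pair_term_le_pair_mean[where f = f, OF f_nonneg before[OF that] ij] show ?thesis
      by (simp add: r_def)
  qed
  have "\<forall>\<^sub>F s in at_right \<delta>. real N * (real N - 1) * B + 1 \<le> f s"
    using f_blowup by (simp add: filterlim_at_top)
  then obtain \<eta> where "\<delta> < \<eta>" and blowup: "\<And>s. \<delta> < s \<Longrightarrow> s < \<eta> \<Longrightarrow> real N * (real N - 1) * B + 1 \<le> f s"
    unfolding eventually_at_right_field by blast
  have "continuous_on {0..} r"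
    unfolding r_def using continuous_on_x ij by (intro continuous_on_norm continuous_on_diff) auto
  then have "isCont r T"
    using \<open>0 < T\<close> by (intro continuous_on_interior) auto
  then have "(r \<longlongrightarrow> r T) (at_left T)"
    unfolding isCont_def by (rule tendsto_mono[OF at_le, rotated]) auto
  then have "\<forall>\<^sub>F \<tau> in at_left T. r \<tau> < \<eta>"
    by (rule order_tendstoD(2)) (use \<open>norm (x i T - x j T) \<le> \<delta>\<close> \<open>\<delta> < \<eta>\<close> in \<open>simp add: r_def\<close>)
  moreover have "\<forall>\<^sub>F \<tau> in at_left T. 0 \<le> \<tau> \<and> \<tau> < T"
    using \<open>0 < T\<close> unfolding eventually_at_left_field by auto
  ultimately have "\<forall>\<^sub>F \<tau> in at_left T. r \<tau> < \<eta> \<and> 0 \<le> \<tau> \<and> \<tau> < T"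
    by (rule eventually_conj)
  then obtain \<tau> where "r \<tau> < \<eta>" "0 \<le> \<tau>" "\<tau> < T"
    using eventually_happens'[OF trivial_limit_at_left_real] by blast
  moreover have "\<delta> < r \<tau>"
    using before[OF \<open>0 \<le> \<tau>\<close> \<open>\<tau> < T\<close>] ij unfolding collisionless_def r_def by auto
  ultimately show False
    using blowup[of "r \<tau>"] bounded[of \<tau>] by linarith
qed

lemma collisionless_all_times:
  assumes "2 * \<gamma> \<le> \<alpha>" and init: "collisionless N \<delta> x 0" and "0 \<le> t"
  shows "collisionless N \<delta> x t"
proof (cases "\<alpha> = 2 * \<gamma>")
  case True
  then have exponent: "\<alpha> / (2 * \<gamma>) = 1"
    using gamma by simp
  show ?thesis
  proof (rule collisionless_of_barrier[where f = "\<lambda>s. ln (1 + (s - \<delta>)) - ln (s - \<delta>)"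
        and f' = "\<lambda>s. 1 / (1 + (s - \<delta>)) - 1 / (s - \<delta>)" and \<kappa> = 1,
        OF _ _ zero_le_one _ filterlim_ln_barrier init \<open>0 \<le> t\<close>])
    fix s assume "\<delta> < s"
    then show "((\<lambda>s. ln (1 + (s - \<delta>)) - ln (s - \<delta>)) has_real_derivative
        1 / (1 + (s - \<delta>)) - 1 / (s - \<delta>)) (at s)"
      by (auto intro!: derivative_eq_intros)
    have "1 / (1 + (s - \<delta>)) \<le> 1 / (s - \<delta>)"
      using \<open>\<delta> < s\<close> by (intro divide_left_mono) auto
    with \<open>\<delta> < s\<close> show "\<bar>1 / (1 + (s - \<delta>)) - 1 / (s - \<delta>)\<bar> \<le> 1 * (s - \<delta>) powr (- (\<alpha> / (2 * \<gamma>)))"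
      by (simp add: exponent powr_neg_one)
    show "0 \<le> ln (1 + (s - \<delta>)) - ln (s - \<delta>)"
      using \<open>\<delta> < s\<close> by simp
  qed
next
  case False
  define \<beta> where "\<beta> = \<alpha> / (2 * \<gamma>) - 1"
  have "0 < \<beta>"
    using False assms(1) gamma by (simp add: \<beta>_def field_simps)
  show ?thesis
  proof (rule collisionless_of_barrier[where f = "\<lambda>s. (s - \<delta>) powr (- \<beta>)"
        and f' = "\<lambda>s. - \<beta> * (s - \<delta>) powr (- \<beta> - 1)" and \<kappa> = \<beta>,
        OF _ _ _ _ filterlim_powr_barrier[OF \<open>0 < \<beta>\<close>] init \<open>0 \<le> t\<close>])
    fix s assume "\<delta> < s"
    then show "((\<lambda>s. (s - \<delta>) powr (- \<beta>)) has_real_derivative - \<beta> * (s - \<delta>) powr (- \<beta> - 1)) (at s)"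
      by (auto intro!: derivative_eq_intros)
    show "\<bar>- \<beta> * (s - \<delta>) powr (- \<beta> - 1)\<bar> \<le> \<beta> * (s - \<delta>) powr (- (\<alpha> / (2 * \<gamma>)))"
      using \<open>0 < \<beta>\<close> by (simp add: \<beta>_def abs_mult)
  qed (use \<open>0 < \<beta>\<close> in auto)
qed

lemma L0_estimate:
  assumes "\<alpha> = 2 * \<gamma>" and "0 \<le> t"
    and col: "\<And>\<tau>. 0 \<le> \<tau> \<Longrightarrow> \<tau> \<le> t \<Longrightarrow> collisionless N \<delta> x \<tau>"
  shows "L0 N \<delta> x t + 1 / (2 * C\<^sub>1 * \<gamma> * (real N - 1)) * (\<Sum>i\<in>{1..N}. (norm (v i t))\<^sup>2)
    \<le> (2 * \<gamma> - 1) / (2 * \<gamma>) * t + L0 N \<delta> x 0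
      + 1 / (2 * C\<^sub>1 * \<gamma> * (real N - 1)) * (\<Sum>i\<in>{1..N}. (norm (v i 0))\<^sup>2)"
proof -
  have "\<alpha> / (2 * \<gamma>) = 1"
    using assms(1) gamma by simp
  then have fb: "\<bar>1 / (s - \<delta>)\<bar> \<le> 1 * (s - \<delta>) powr (- (\<alpha> / (2 * \<gamma>)))" if "\<delta> < s" for s
    using that by (simp add: powr_neg_one)
  have fd: "((\<lambda>s. ln (s - \<delta>)) has_real_derivative 1 / (s - \<delta>)) (at s)" if "\<delta> < s" for s
    using that by (auto intro!: derivative_eq_intros)
  from energy_estimate[where f = "\<lambda>s. ln (s - \<delta>)", OF fd fb zero_le_one \<open>0 \<le> t\<close> col] show ?thesis
    by (simp add: L0_def pair_mean_def kinetic_energy_def)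
qed

lemma Lbeta_estimate:
  assumes "2 * \<gamma> < \<alpha>" and \<beta>: "\<beta> = \<alpha> / (2 * \<gamma>) - 1" and "0 \<le> t"
    and col: "\<And>\<tau>. 0 \<le> \<tau> \<Longrightarrow> \<tau> \<le> t \<Longrightarrow> collisionless N \<delta> x \<tau>"
  shows "Lbeta N \<delta> \<beta> x t + \<beta> / (2 * C\<^sub>1 * \<gamma> * (real N - 1)) * (\<Sum>i\<in>{1..N}. (norm (v i t))\<^sup>2)
    \<le> (2 * \<gamma> - 1) * \<beta> / (2 * \<gamma>) * t + Lbeta N \<delta> \<beta> x 0
      + \<beta> / (2 * C\<^sub>1 * \<gamma> * (real N - 1)) * (\<Sum>i\<in>{1..N}. (norm (v i 0))\<^sup>2)"
proof -
  have "0 < \<beta>"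
    using assms(1) gamma by (simp add: \<beta> field_simps)
  then have fb: "\<bar>- \<beta> * (s - \<delta>) powr (- \<beta> - 1)\<bar> \<le> \<beta> * (s - \<delta>) powr (- (\<alpha> / (2 * \<gamma>)))" for s
    by (simp add: \<beta> abs_mult)
  have fd: "((\<lambda>s. (s - \<delta>) powr (- \<beta>)) has_real_derivative - \<beta> * (s - \<delta>) powr (- \<beta> - 1)) (at s)"
    if "\<delta> < s" for s
    using that by (auto intro!: derivative_eq_intros)
  from energy_estimate[where f = "\<lambda>s. (s - \<delta>) powr (- \<beta>)", OF fd fb less_imp_le[OF \<open>0 < \<beta>\<close>] \<open>0 \<le> t\<close> col]
  show ?thesis
    by (simp add: Lbeta_def pair_mean_def kinetic_energy_def mult_ac)
qed

end

theorem theorem2: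
  fixes N :: nat and \<gamma> C\<^sub>1 \<delta> \<alpha> :: real
    and \<Gamma> :: "'a::euclidean_space \<Rightarrow> 'a"
    and x v :: "nat \<Rightarrow> real \<Rightarrow> 'a"
  assumes N: "N \<ge> 2"
    and gamma: "1/2 < \<gamma>" "\<gamma> < 3/2"
    and C1: "C\<^sub>1 > 0"
    and A1: "\<And>w. \<Gamma> (- w) = - \<Gamma> w"
    and A2: "\<And>w. inner (\<Gamma> w) w \<ge> C\<^sub>1 * norm w powr (2 * \<gamma>)"
    and delta: "\<delta> \<ge> 0"
    and alpha: "\<alpha> \<ge> 2 * \<gamma>"
    and init: "collisionless N \<delta> x 0"
    and dx: "\<And>i t. i \<in> {1..N} \<Longrightarrow> t \<ge> 0 \<Longrightarrow>
               (x i has_vector_derivative v i t) (at t within {0..})"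
    and dv: "\<And>i t. i \<in> {1..N} \<Longrightarrow> t \<ge> 0 \<Longrightarrow> collisionless N \<delta> x t \<Longrightarrow>
               (v i has_vector_derivative
                  ((1 / real N) *\<^sub>R (\<Sum>j\<in>{1..N}.
                      psi_delta \<delta> \<alpha> (norm (x i t - x j t)) *\<^sub>R \<Gamma> (v j t - v i t))))
               (at t within {0..})"
  shows "life_span N \<delta> x = \<infinity> \<and>
    (\<forall>t. 0 \<le> t \<and> ereal t < life_span N \<delta> x \<longrightarrow>
      (\<alpha> = 2 * \<gamma> \<longrightarrow>
         L0 N \<delta> x t + 1 / (2 * C\<^sub>1 * \<gamma> * (real N - 1)) * (\<Sum>i\<in>{1..N}. (norm (v i t))\<^sup>2)
         \<le> (2 * \<gamma> - 1) / (2 * \<gamma>) * t + L0 N \<delta> x 0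
           + 1 / (2 * C\<^sub>1 * \<gamma> * (real N - 1)) * (\<Sum>i\<in>{1..N}. (norm (v i 0))\<^sup>2)) \<and>
      (\<alpha> > 2 * \<gamma> \<longrightarrow>
         (let \<beta> = \<alpha> / (2 * \<gamma>) - 1 in
         Lbeta N \<delta> \<beta> x t + \<beta> / (2 * C\<^sub>1 * \<gamma> * (real N - 1)) * (\<Sum>i\<in>{1..N}. (norm (v i t))\<^sup>2)
         \<le> (2 * \<gamma> - 1) * \<beta> / (2 * \<gamma>) * t + Lbeta N \<delta> \<beta> x 0
           + \<beta> / (2 * C\<^sub>1 * \<gamma> * (real N - 1)) * (\<Sum>i\<in>{1..N}. (norm (v i 0))\<^sup>2))))"
proof -
  interpret cs_flow N \<gamma> C\<^sub>1 \<delta> \<alpha> \<Gamma> x v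
    using assms by unfold_locales auto
  have col: "collisionless N \<delta> x \<tau>" if "0 \<le> \<tau>" "\<tau> \<le> t" for t \<tau>
    using collisionless_all_times[OF alpha init that(1)] .
  show ?thesis
    unfolding Let_def
    by (intro conjI allI impI life_span_eq_infinity[OF col[OF _ order_refl]]
        L0_estimate[OF _ _ col] Lbeta_estimate[OF _ refl _ col]) auto
qed

end
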